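(* Let $\mu$ be a probability distribution on $\mathbb{Z}_{\ge0}$ with mean $m=\sum_k k\mu_k<1$ and $\mu_n\sim L(n)/n^2$ as $n\to\infty$, where $L:\mathbb{R}_+\to(0,\infty)$ is slowly varying. Let $X$ be a random variable with $\mathbb{P}(X=i)=\mu_{i+1}$ for integers $i\ge -1$. Let $(a_n)_{n\ge1}$ be a sequence with $n\mathbb{P}(X\ge a_n)\to1$, set $b_n=n\mathbb{E}[X\mathbb{1}_{|X|\le a_n}]$, and set $\ell^\star(n)=\sum_{k=n}^\infty L(k)/k$ for $n\ge1$. Then as $n\to\infty$: (i) $\ell^\star$ is slowly varying, $\ell^\star(n)\to0$, and $L(n)=o(\ell^\star(n))$; (ii) $b_n+n(1-m)\sim -n\,\ell^\star(a_n)$ and $b_n\sim -n(1-m)$; (iii) $a_n=o(n)$.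
   Context: A function $L$ is slowly varying if $L(ax)/L(x)\to1$ as $x\to\infty$ for every $a>0$. The quantity $\ell^\star(n)$ is finite since $\mu$ has finite mean. *)

theory Defs
  imports "HOL-Analysis.Analysis" "HOL-Library.Landau_Symbols"
begin

definition slowly_varying :: "(real \<Rightarrow> real) \<Rightarrow> bool" where
  "slowly_varying L \<longleftrightarrow> (\<forall>a>0. ((\<lambda>x. L (a * x) / L x) \<longlongrightarrow> 1) at_top)"

text \<open>X takes value i with probability mu (i+1), i.e. X = K - 1 where P(K = k) = mu k.
  P(X \<ge> a):\<close>
definition tailX :: "(nat \<Rightarrow> real) \<Rightarrow> real \<Rightarrow> real" where
  "tailX mu a = infsum mu {k. real k - 1 \<ge> a}"

definition trunc_meanX :: "(nat \<Rightarrow> real) \<Rightarrow> real \<Rightarrow> real" where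
  "trunc_meanX mu a = (\<Sum>k\<in>{k. \<bar>real k - 1\<bar> \<le> a}. (real k - 1) * mu k)"

definition ell_star :: "(real \<Rightarrow> real) \<Rightarrow> real \<Rightarrow> real" where
  "ell_star L x = infsum (\<lambda>k::nat. L (real k) / real k) {k. real k \<ge> x}"

end

theory Submission
  imports Defs
begin

text \<open>Write \<open>l(k) = L(k)/k\<close>. Since \<open>k mu\<^sub>k \<sim> l(k)\<close> and \<open>mu\<close> has finite mean, \<open>l\<close> is summable and
  \<open>\<ell>\<^sup>\<star>\<close> is its tail. By the uniform convergence theorem for slowly varying functions, \<open>L(k)\<close> stays
  within a factor 2 of \<open>L(n)\<close> for \<open>n \<le> k \<le> Mn\<close>. Summing \<open>l\<close> over such blocks gives
  \<open>\<ell>\<^sup>\<star>(n) \<ge> L(n) ln M / 2\<close>, hence \<open>L = o(\<ell>\<^sup>\<star>)\<close>, and \<open>\<ell>\<^sup>\<star>(n) - \<ell>\<^sup>\<star>(bn) \<le> 2b L(n)\<close>, hence \<open>\<ell>\<^sup>\<star>\<close> is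
  slowly varying. Since \<open>E X = m - 1\<close>, we have \<open>b\<^sub>n + n(1 - m) = -n E[X; X > a\<^sub>n]\<close>, a tail of a series
  whose terms are asymptotic to \<open>l\<close>, so it is \<open>\<sim> -n \<ell>\<^sup>\<star>(a\<^sub>n) = o(n)\<close>. Finally
  \<open>a\<^sub>n P(X \<ge> a\<^sub>n) \<le> E[X; X \<ge> a\<^sub>n] \<rightarrow> 0\<close> while \<open>n P(X \<ge> a\<^sub>n) \<rightarrow> 1\<close>, so \<open>a\<^sub>n = o(n)\<close>.\<close>

section \<open>The uniform convergence theorem\<close>

definition large_increment_shifts ::
    "(real \<Rightarrow> real) \<Rightarrow> real \<Rightarrow> real \<Rightarrow> (nat \<Rightarrow> real) \<Rightarrow> nat \<Rightarrow> real set" where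
  "large_increment_shifts h T e z n = {s \<in> {0..T}. \<exists>m\<ge>n. e \<le> \<bar>h (z m + s) - h (z m)\<bar>}"

lemma large_increment_shifts_sets:
  assumes "h \<in> borel_measurable borel"
  shows "large_increment_shifts h T e z n \<in> sets lborel"
proof -
  have "large_increment_shifts h T e z n =
      {0..T} \<inter> (\<Union>m\<in>{n..}. {s. e \<le> \<bar>h (z m + s) - h (z m)\<bar>})"
    by (auto simp: large_increment_shifts_def)
  also have "\<dots> \<in> sets lborel"
    using assms by measurable
  finally show ?thesis .
qed

lemma measure_large_increment_shifts_tendsto_0:
  fixes h :: "real \<Rightarrow> real" and z :: "nat \<Rightarrow> real"
  assumes h_meas: "h \<in> borel_measurable borel"
    and h_incr: "\<And>s. s \<ge> 0 \<Longrightarrow> ((\<lambda>x. h (x + s) - h x) \<longlongrightarrow> 0) at_top"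
    and z: "filterlim z at_top sequentially" and e: "e > 0"
  shows "(\<lambda>n. measure lborel (large_increment_shifts h T e z n)) \<longlonglongrightarrow> 0"
proof -
  let ?E = "large_increment_shifts h T e z"
  have "(\<lambda>n. measure lborel (?E n)) \<longlonglongrightarrow> measure lborel (\<Inter>n. ?E n)"
  proof (rule Lim_measure_decseq)
    show "range ?E \<subseteq> sets lborel"
      using large_increment_shifts_sets[OF h_meas] by auto
    show "decseq ?E"
      unfolding decseq_def large_increment_shifts_def by (auto 4 4 intro: le_trans)
    show "emeasure lborel (?E n) \<noteq> \<infinity>" for n
    proof -
      have "bounded (?E n)"
        by (rule bounded_subset[OF bounded_closed_interval]) (auto simp: large_increment_shifts_def)
      then show ?thesis
        using emeasure_bounded_finite[of "?E n"] by simp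
    qed
  qed
  moreover have "(\<Inter>n. ?E n) = {}"
  proof safe
    fix s assume s: "s \<in> (\<Inter>n. ?E n)"
    then have "s \<ge> 0" by (auto simp: large_increment_shifts_def)
    from filterlim_compose[OF h_incr[OF this] z]
    have "\<forall>\<^sub>F m in sequentially. \<bar>h (z m + s) - h (z m)\<bar> < e"
      using e by (auto simp: tendsto_iff dist_real_def)
    then obtain N where "\<And>m. m \<ge> N \<Longrightarrow> \<bar>h (z m + s) - h (z m)\<bar> < e"
      by (auto simp: eventually_sequentially)
    moreover from s have "s \<in> ?E N" by blast
    ultimately show "s \<in> {}"
      by (force simp: large_increment_shifts_def)
  qed
  ultimately show ?thesis by simp
qed

lemma lborel_translation_vimage:
  fixes A :: "real set"
  assumes "A \<in> sets lborel"
  shows "(+) a -` A \<in> sets lborel" and "measure lborel ((+) a -` A) = measure lborel A"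
  using measurable_sets[OF _ assms, of "(+) a" lborel] measure_distr[of "(+) a" lborel borel A] assms
  by (simp_all add: lborel_distr_plus)

lemma exists_notin_union_of_small_measure:
  fixes A B :: "real set"
  assumes A: "A \<in> sets lborel" and B: "B \<in> sets lborel" and bounded: "bounded (A \<union> B)"
    and small: "measure lborel A + measure lborel B < r - l"
  shows "\<exists>s\<in>{l..r}. s \<notin> A \<union> B"
proof (rule ccontr)
  assume "\<not> ?thesis"
  then have "{l..r} \<subseteq> A \<union> B" by auto
  moreover have "A \<union> B \<in> fmeasurable lborel"
    using A B emeasure_bounded_finite[OF bounded] by (intro fmeasurableI) auto
  ultimately have "measure lborel {l..r} \<le> measure lborel (A \<union> B)"
    by (intro measure_mono_fmeasurable) auto
  also have "\<dots> \<le> measure lborel A + measure lborel B"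
    using A B by (intro measure_Un_le) auto
  finally show False
    using small measure_nonneg[of lborel A] measure_nonneg[of lborel B] by simp
qed

text \<open>An Egorov-type argument: for large \<open>n\<close> most shifts \<open>s \<in> [0, 2T]\<close> have only small
  increments from \<open>x\<^sub>n\<close> and from \<open>y\<^sub>n = x\<^sub>n + u\<^sub>n\<close>, so some \<open>s \<in> [u\<^sub>n, 2T]\<close> is good for both and
  \<open>h y\<^sub>n - h x\<^sub>n\<close> splits into two small increments through \<open>x\<^sub>n + s = y\<^sub>n + (s - u\<^sub>n)\<close>.\<close>
theorem uniform_convergence_additive:
  fixes h :: "real \<Rightarrow> real"
  assumes h_meas: "h \<in> borel_measurable borel"
    and h_incr: "\<And>s. s \<ge> 0 \<Longrightarrow> ((\<lambda>x. h (x + s) - h x) \<longlongrightarrow> 0) at_top"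
    and T: "T > 0" and e: "e > 0"
  shows "\<forall>\<^sub>F x in at_top. \<forall>u\<in>{0..T}. \<bar>h (x + u) - h x\<bar> < e"
proof (rule ccontr)
  assume "\<not> ?thesis"
  then have "\<forall>n::nat. \<exists>x\<ge>real n. \<exists>u\<in>{0..T}. e \<le> \<bar>h (x + u) - h x\<bar>"
    by (auto simp: eventually_at_top_linorder not_less)
  then obtain x u where x: "\<And>n. x n \<ge> real n" and u: "\<And>n. u n \<in> {0..T}"
    and large: "\<And>n. e \<le> \<bar>h (x n + u n) - h (x n)\<bar>"
    by metis
  define y where "y n = x n + u n" for n
  have x_inf: "filterlim x at_top sequentially" and y_inf: "filterlim y at_top sequentially"
    using x u by (auto intro!: filterlim_at_top_mono[OF filterlim_real_sequentially]
        simp: y_def add_increasing2)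
  let ?E = "\<lambda>z. large_increment_shifts h (2 * T) (e / 2) z"
  have small_E: "\<forall>\<^sub>F n in sequentially. measure lborel (?E z n) < T / 2"
    if "filterlim z at_top sequentially" for z
    using order_tendstoD(2)[OF measure_large_increment_shifts_tendsto_0[OF h_meas h_incr that,
        where e = "e / 2" and T = "2 * T"], of "T / 2"] T e by simp
  have "\<forall>\<^sub>F n in sequentially. measure lborel (?E x n) < T / 2 \<and> measure lborel (?E y n) < T / 2"
    using small_E[OF x_inf] small_E[OF y_inf] by (rule eventually_conj)
  then obtain n where Ex: "measure lborel (?E x n) < T / 2" and Ey: "measure lborel (?E y n) < T / 2"
    by (auto simp: eventually_sequentially)
  define P where "P = (+) (- u n) -` ?E y n"
  have E_sets: "?E z n \<in> sets lborel" for z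
    by (rule large_increment_shifts_sets[OF h_meas])
  have "\<exists>s\<in>{u n..2 * T}. s \<notin> ?E x n \<union> P"
  proof (rule exists_notin_union_of_small_measure)
    show "P \<in> sets lborel"
      unfolding P_def by (rule lborel_translation_vimage(1)[OF E_sets])
    have "?E x n \<union> P \<subseteq> {0..3 * T}"
      using u[of n] T by (auto simp: P_def large_increment_shifts_def)
    then show "bounded (?E x n \<union> P)"
      by (rule bounded_subset[OF bounded_closed_interval])
    show "measure lborel (?E x n) + measure lborel P < 2 * T - u n"
      using Ex Ey u[of n] lborel_translation_vimage(2)[OF E_sets[of y], of "- u n"]
      by (simp add: P_def)
  qed (rule E_sets)
  then obtain s where s: "s \<in> {u n..2 * T}" "s \<notin> ?E x n" "s \<notin> P" by blast
  have "\<bar>h (x n + s) - h (x n)\<bar> < e / 2"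
    using s(1,2) u[of n] by (force simp: large_increment_shifts_def)
  moreover have "\<bar>h (y n + (s - u n)) - h (y n)\<bar> < e / 2"
    using s(1,3) u[of n] by (force simp: large_increment_shifts_def P_def)
  ultimately show False
    using large[of n] unfolding y_def by simp argo
qed

lemma slowly_varying_ln_exp_increment_tendsto_0:
  fixes L :: "real \<Rightarrow> real"
  assumes L_pos: "\<And>x. x > 0 \<Longrightarrow> L x > 0" and L_sv: "slowly_varying L"
  shows "((\<lambda>t. ln (L (exp (t + s))) - ln (L (exp t))) \<longlongrightarrow> 0) at_top"
proof -
  have "((\<lambda>x. L (exp s * x) / L x) \<longlongrightarrow> 1) at_top"
    using L_sv by (simp add: slowly_varying_def)
  from tendsto_ln[OF filterlim_compose[OF this exp_at_top]]
  have "((\<lambda>t. ln (L (exp s * exp t) / L (exp t))) \<longlongrightarrow> 0) at_top" by simp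
  moreover have "ln (L (exp s * exp t) / L (exp t)) = ln (L (exp (t + s))) - ln (L (exp t))" for t
    using L_pos[of "exp t"] L_pos[of "exp s * exp t"] by (simp add: ln_div exp_add mult.commute)
  ultimately show ?thesis by simp
qed

lemma slowly_varying_uniform_ratio_bound:
  fixes L :: "real \<Rightarrow> real"
  assumes L_pos: "\<And>x. x > 0 \<Longrightarrow> L x > 0" and L_meas: "L \<in> borel_measurable borel"
    and L_sv: "slowly_varying L" and M: "M \<ge> 1" and c: "c > 1"
  shows "\<forall>\<^sub>F x in at_top. \<forall>y\<in>{x..M * x}. L x / c \<le> L y \<and> L y \<le> c * L x"
proof -
  define h where "h t = ln (L (exp t))" for t
  have h_meas: "h \<in> borel_measurable borel"
    unfolding h_def using L_meas by measurable
  have h_incr: "((\<lambda>t. h (t + s) - h t) \<longlongrightarrow> 0) at_top" for s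
    unfolding h_def by (rule slowly_varying_ln_exp_increment_tendsto_0[OF L_pos L_sv])
  have "\<forall>\<^sub>F t in at_top. \<forall>u\<in>{0..ln M + 1}. \<bar>h (t + u) - h t\<bar> < ln c"
    using ln_ge_zero[OF M] c by (intro uniform_convergence_additive[OF h_meas h_incr]) auto
  then obtain X where X: "\<forall>t\<ge>X. \<forall>u\<in>{0..ln M + 1}. \<bar>h (t + u) - h t\<bar> < ln c"
    by (auto simp: eventually_at_top_linorder)
  show ?thesis
    using eventually_ge_at_top[of "max 1 (exp X)"]
  proof eventually_elim
    case (elim x)
    show ?case
    proof
      fix y assume y: "y \<in> {x..M * x}"
      have x_pos: "x > 0" and y_pos: "y > 0" and "ln x \<ge> X"
        using elim y by (auto simp: ln_ge_iff)
      moreover have "ln y \<le> ln (M * x)"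
        using y x_pos by simp
      then have "ln y - ln x \<in> {0..ln M + 1}"
        using y x_pos M by (simp add: ln_mult)
      ultimately have "\<bar>h (ln x + (ln y - ln x)) - h (ln x)\<bar> < ln c"
        using X by blast
      then have "\<bar>ln (L y) - ln (L x)\<bar> < ln c"
        using x_pos y_pos by (simp add: h_def)
      then have "ln (L y) < ln (c * L x)" "ln (L x) < ln (c * L y)"
        using L_pos[OF x_pos] L_pos[OF y_pos] c by (auto simp: ln_mult)
      then have "L y < c * L x" "L x < c * L y"
        using L_pos[OF x_pos] L_pos[OF y_pos] c by simp_all
      then show "L x / c \<le> L y \<and> L y \<le> c * L x"
        using c by (simp add: pos_divide_le_eq mult.commute)
    qed
  qed
qed

lemma slowly_varying_uniform_ratio_bound_sequentially:
  fixes L :: "real \<Rightarrow> real"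
  assumes L_meas: "L \<in> borel_measurable borel" and L_sv: "slowly_varying L"
    and L_pos: "\<And>x. x > 0 \<Longrightarrow> L x > 0" and M: "M \<ge> 1"
  shows "\<forall>\<^sub>F n in sequentially. \<forall>y\<in>{real n..M * real n}. L (real n) / 2 \<le> L y \<and> L y \<le> 2 * L (real n)"
  using eventually_compose_filterlim[OF slowly_varying_uniform_ratio_bound[OF L_pos L_meas L_sv M,
        where c = 2] filterlim_real_sequentially] by simp

section \<open>Tails of series\<close>

definition tail_sum :: "(nat \<Rightarrow> real) \<Rightarrow> nat \<Rightarrow> real" where
  "tail_sum f N = (\<Sum>i. f (i + N))"

lemma tail_sum_shift: "tail_sum (\<lambda>i. f (Suc i)) N = tail_sum f (Suc N)"
  by (simp add: tail_sum_def)

context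
  fixes f :: "nat \<Rightarrow> real"
  assumes f_summable: "summable f"
begin

lemma tail_sum_eq_suminf_diff: "tail_sum f N = suminf f - (\<Sum>i<N. f i)"
  unfolding tail_sum_def by (rule suminf_minus_initial_segment[OF f_summable])

lemma tail_sum_tendsto_0: "tail_sum f \<longlonglongrightarrow> 0"
proof -
  have "(\<lambda>N. suminf f - (\<Sum>i<N. f i)) \<longlonglongrightarrow> suminf f - suminf f"
    by (intro tendsto_intros summable_LIMSEQ[OF f_summable])
  then show ?thesis by (simp add: tail_sum_eq_suminf_diff[abs_def])
qed

lemma tail_sum_diff:
  assumes "N \<le> N'"
  shows "tail_sum f N - tail_sum f N' = (\<Sum>i\<in>{N..<N'}. f i)"
proof -
  have "(\<Sum>i<N'. f i) = (\<Sum>i<N. f i) + (\<Sum>i\<in>{N..<N'}. f i)"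
    using assms by (metis lessThan_atLeast0 sum.atLeastLessThan_concat zero_le)
  then show ?thesis by (simp add: tail_sum_eq_suminf_diff)
qed

context
  assumes f_nonneg: "\<And>k. f k \<ge> 0"
begin

lemma tail_sum_nonneg: "tail_sum f N \<ge> 0"
  unfolding tail_sum_def
  using summable_ignore_initial_segment[OF f_summable] f_nonneg by (simp add: suminf_nonneg)

lemma sum_le_tail_sum: "N \<le> N' \<Longrightarrow> (\<Sum>i\<in>{N..<N'}. f i) \<le> tail_sum f N"
  using tail_sum_diff[of N N'] tail_sum_nonneg[of N'] by simp

lemma tail_sum_antimono: "N \<le> N' \<Longrightarrow> tail_sum f N' \<le> tail_sum f N"
  using tail_sum_diff[of N N'] sum_nonneg[of "{N..<N'}" f] f_nonneg by force

lemma tail_sum_pos: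
  assumes "\<forall>\<^sub>F k in sequentially. f k > 0"
  shows "tail_sum f N > 0"
proof -
  obtain K where K: "\<And>k. k \<ge> K \<Longrightarrow> f k > 0"
    using assms by (auto simp: eventually_sequentially)
  define k where "k = max N K"
  have k: "N \<le> k" "f k > 0"
    using K by (simp_all add: k_def)
  have "f k \<le> (\<Sum>i\<in>{N..<Suc k}. f i)"
    using k f_nonneg by (intro member_le_sum) auto
  also have "\<dots> \<le> tail_sum f N"
    using k by (intro sum_le_tail_sum) auto
  finally show ?thesis using k by simp
qed

lemma infsum_atLeast_eq_tail_sum: "infsum f {k. real k \<ge> y} = tail_sum f (nat \<lceil>y\<rceil>)"
proof -
  define N where "N = nat \<lceil>y\<rceil>"
  have "{k. real k \<ge> y} = (\<lambda>i. i + N) ` UNIV"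
  proof safe
    fix k assume "y \<le> real k"
    then have "k \<ge> N" unfolding N_def by linarith
    then show "k \<in> range (\<lambda>i. i + N)" by (intro image_eqI[of _ _ "k - N"]) auto
  next
    show "y \<le> real (i + N)" for i unfolding N_def by linarith
  qed
  then have "infsum f {k. real k \<ge> y} = infsum (\<lambda>i. f (i + N)) UNIV"
    by (simp add: infsum_reindex inj_on_def comp_def)
  also have "\<dots> = tail_sum f N"
    unfolding tail_sum_def using summable_ignore_initial_segment[OF f_summable] f_nonneg
    by (intro infsumI sums_nonneg_imp_has_sum) auto
  finally show ?thesis by (simp add: N_def)
qed

end

end

lemma summable_asymp_equiv:
  fixes f g :: "nat \<Rightarrow> real"
  assumes "f \<sim>[sequentially] g" and "summable (\<lambda>k. norm (g k))"
  shows "summable f"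
proof -
  have "\<forall>\<^sub>F k in sequentially. norm (f k) \<le> 2 * norm (g k)"
    by (rule asymp_equiv_imp_eventually_le[OF assms(1)]) simp
  then show ?thesis
    by (rule summable_comparison_test_ev) (intro summable_mult assms(2))
qed

lemma asymp_equiv_tail_sum:
  fixes f g :: "nat \<Rightarrow> real"
  assumes fg: "f \<sim>[sequentially] g" and g_nonneg: "\<And>k. g k \<ge> 0" and g_summable: "summable g"
  shows "tail_sum f \<sim>[sequentially] tail_sum g"
  unfolding asymp_equiv_altdef
proof (rule landau_o.smallI)
  fix c :: real assume c: "c > 0"
  have f_summable: "summable f"
    using g_summable g_nonneg by (intro summable_asymp_equiv[OF fg]) auto
  have "(\<lambda>k. f k - g k) \<in> o[sequentially](g)"
    using fg by (simp add: asymp_equiv_altdef)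
  from landau_o.smallD[OF this c]
  obtain N0 where N0: "\<And>k. k \<ge> N0 \<Longrightarrow> \<bar>f k - g k\<bar> \<le> c * g k"
    using g_nonneg by (auto simp: eventually_sequentially)
  show "\<forall>\<^sub>F N in sequentially. norm (tail_sum f N - tail_sum g N) \<le> c * norm (tail_sum g N)"
    using eventually_ge_at_top[of N0]
  proof eventually_elim
    case (elim N)
    have diff: "(\<lambda>i. f (i + N) - g (i + N)) sums (tail_sum f N - tail_sum g N)"
      unfolding tail_sum_def using f_summable g_summable
      by (intro sums_diff summable_sums summable_ignore_initial_segment)
    have bound: "(\<lambda>i. c * g (i + N)) sums (c * tail_sum g N)"
      unfolding tail_sum_def using g_summable
      by (intro sums_mult summable_sums summable_ignore_initial_segment)
    have bound_i: "f (i + N) - g (i + N) \<le> c * g (i + N)" "- (c * g (i + N)) \<le> f (i + N) - g (i + N)"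
      for i using N0[of "i + N"] elim by (auto simp: abs_le_iff)
    have "tail_sum f N - tail_sum g N \<le> c * tail_sum g N"
      by (rule sums_le[OF bound_i(1) diff bound])
    moreover have "- (c * tail_sum g N) \<le> tail_sum f N - tail_sum g N"
      by (rule sums_le[OF bound_i(2) sums_minus[OF bound] diff])
    ultimately have "\<bar>tail_sum f N - tail_sum g N\<bar> \<le> c * tail_sum g N"
      by (simp add: abs_le_iff)
    then show ?case
      using tail_sum_nonneg[OF g_summable g_nonneg] by simp
  qed
qed

section \<open>The tail function \<open>ell_star\<close>\<close>

lemma filterlim_nat_ceiling_at_top: "filterlim (\<lambda>x::real. nat \<lceil>x\<rceil>) sequentially at_top"
  unfolding filterlim_at_top eventually_at_top_linorder
proof (intro allI exI impI)
  show "Z \<le> nat \<lceil>x\<rceil>" if "real Z \<le> x" for Z :: nat and x :: real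
    using that by linarith
qed

lemma filterlim_nat_floor_at_top: "filterlim (\<lambda>x::real. nat \<lfloor>x\<rfloor>) sequentially at_top"
  unfolding filterlim_at_top eventually_at_top_linorder
proof (intro allI exI impI)
  show "Z \<le> nat \<lfloor>x\<rfloor>" if "real Z \<le> x" for Z :: nat and x :: real
    using that by linarith
qed

lemma ln_diff_le_harmonic_sum:
  assumes "1 \<le> n" "n \<le> N"
  shows "ln (real N) - ln (real n) \<le> (\<Sum>k\<in>{n..<N}. 1 / real k)"
  using assms(2)
proof (induction N rule: dec_induct)
  case (step N)
  have N: "real N \<ge> 1" using assms step by simp
  have "1 + 1 / real N = real (Suc N) / real N"
    using N by (simp add: field_simps)
  then have "ln (real (Suc N)) - ln (real N) = ln (1 + 1 / real N)"
    using N by (simp add: ln_div)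
  also have "\<dots> \<le> 1 / real N"
    by (rule ln_add_one_self_le_self) simp
  finally show ?case using step by simp
qed simp

lemma slowly_varying_ge_1I:
  fixes f :: "real \<Rightarrow> real"
  assumes nonzero: "\<And>x. f x \<noteq> 0"
    and ratio: "\<And>c. c \<ge> 1 \<Longrightarrow> ((\<lambda>x. f (c * x) / f x) \<longlongrightarrow> 1) at_top"
  shows "slowly_varying f"
  unfolding slowly_varying_def
proof (intro allI impI)
  fix c :: real assume c: "c > 0"
  show "((\<lambda>x. f (c * x) / f x) \<longlongrightarrow> 1) at_top"
  proof (cases "c \<ge> 1")
    case False
    have "filterlim (\<lambda>x. c * x) at_top at_top"
      by (rule filterlim_tendsto_pos_mult_at_top[OF tendsto_const c filterlim_ident])
    from filterlim_compose[OF ratio[of "1 / c"] this]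
    have "((\<lambda>x. f x / f (c * x)) \<longlongrightarrow> 1) at_top"
      using c False by simp
    then have "((\<lambda>x. inverse (f x / f (c * x))) \<longlongrightarrow> inverse 1) at_top"
      by (intro tendsto_inverse) auto
    then show ?thesis by simp
  qed (rule ratio)
qed

lemma slowly_varying_antimono_asymp_equiv:
  fixes l :: "real \<Rightarrow> real" and f g :: "'a \<Rightarrow> real"
  assumes l_sv: "slowly_varying l" and l_antimono: "\<And>x y. x \<le> y \<Longrightarrow> l y \<le> l x"
    and f: "filterlim f at_top F" and c: "c \<ge> 1"
    and between: "\<forall>\<^sub>F x in F. f x \<le> g x \<and> g x \<le> c * f x"
  shows "(\<lambda>x. l (g x)) \<sim>[F] (\<lambda>x. l (f x))"
proof (rule asymp_equiv_sandwich_real)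
  have "((\<lambda>x. l (c * x) / l x) \<longlongrightarrow> 1) at_top"
    using l_sv c by (simp add: slowly_varying_def)
  from filterlim_compose[OF this f]
  show "(\<lambda>x. l (c * f x)) \<sim>[F] (\<lambda>x. l (f x))"
    by (intro asymp_equivI') simp
  show "\<forall>\<^sub>F x in F. l (g x) \<in> {l (c * f x)..l (f x)}"
    using between by eventually_elim (auto intro: l_antimono)
qed simp

lemma L_div_real_nonneg:
  fixes L :: "real \<Rightarrow> real"
  assumes "\<And>x. x > 0 \<Longrightarrow> L x > 0"
  shows "L (real k) / real k \<ge> 0"
  using assms[of "real k"] by (cases "k = 0") auto

context
  fixes L :: "real \<Rightarrow> real"
  assumes L_pos: "\<And>x. x > 0 \<Longrightarrow> L x > 0"
    and L_summable: "summable (\<lambda>k. L (real k) / real k)"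
begin

lemma ell_star_eq_tail_sum: "ell_star L x = tail_sum (\<lambda>k. L (real k) / real k) (nat \<lceil>x\<rceil>)"
  unfolding ell_star_def by (rule infsum_atLeast_eq_tail_sum[OF L_summable L_div_real_nonneg[of L, OF L_pos]])

lemma ell_star_nat_ceiling: "ell_star L (real (nat \<lceil>x\<rceil>)) = ell_star L x"
  by (simp add: ell_star_eq_tail_sum)

lemma ell_star_pos: "ell_star L x > 0"
proof -
  have "L (real k) / real k > 0" if "k \<ge> 1" for k
    using that L_pos[of "real k"] by simp
  then show ?thesis
    unfolding ell_star_eq_tail_sum
    by (intro tail_sum_pos[OF L_summable L_div_real_nonneg[of L, OF L_pos]] eventually_sequentiallyI)
qed

lemma ell_star_antimono: "x \<le> y \<Longrightarrow> ell_star L y \<le> ell_star L x"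
  unfolding ell_star_eq_tail_sum
  by (intro tail_sum_antimono[OF L_summable L_div_real_nonneg[of L, OF L_pos]] nat_mono ceiling_mono)

lemma ell_star_tendsto_0: "(ell_star L \<longlongrightarrow> 0) at_top"
  unfolding ell_star_eq_tail_sum[abs_def]
  by (rule filterlim_compose[OF tail_sum_tendsto_0[OF L_summable] filterlim_nat_ceiling_at_top])

lemma ell_star_diff:
  "N \<le> N' \<Longrightarrow> ell_star L (real N) - ell_star L (real N') = (\<Sum>k\<in>{N..<N'}. L (real k) / real k)"
  by (simp add: ell_star_eq_tail_sum tail_sum_diff[OF L_summable])

lemma sum_le_ell_star: "N \<le> N' \<Longrightarrow> (\<Sum>k\<in>{N..<N'}. L (real k) / real k) \<le> ell_star L (real N)"
  by (simp add: ell_star_eq_tail_sum sum_le_tail_sum[OF L_summable L_div_real_nonneg[of L, OF L_pos]])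

context
  assumes L_meas: "L \<in> borel_measurable borel" and L_sv: "slowly_varying L"
begin

text \<open>The sum of \<open>L(k)/k\<close> over \<open>n \<le> k < Mn\<close> is at least \<open>L(n) ln M / 2\<close>, and \<open>ln M\<close> is arbitrary.\<close>
lemma L_smallo_ell_star: "(\<lambda>n. L (real n)) \<in> o[sequentially](\<lambda>n. ell_star L (real n))"
proof (rule landau_o.smallI)
  fix c :: real assume c: "c > 0"
  define M where "M = nat \<lceil>exp (2 / c)\<rceil>"
  have M_ge: "real M \<ge> exp (2 / c)" unfolding M_def by linarith
  moreover have "exp (2 / c) \<ge> 1" using c by simp
  ultimately have M1: "real M \<ge> 1" by linarith
  with M_ge have M2: "ln (real M) \<ge> 2 / c"
    by (simp add: ln_ge_iff)
  have "\<forall>\<^sub>F n in sequentially.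
      \<forall>y\<in>{real n..real M * real n}. L (real n) / 2 \<le> L y \<and> L y \<le> 2 * L (real n)"
    by (rule slowly_varying_uniform_ratio_bound_sequentially[OF L_meas L_sv L_pos M1])
  then show "\<forall>\<^sub>F n in sequentially. norm (L (real n)) \<le> c * norm (ell_star L (real n))"
    using eventually_ge_at_top[of "1::nat"]
  proof eventually_elim
    case (elim n)
    have Ln: "L (real n) > 0" using L_pos elim by simp
    have "L (real n) = c * (L (real n) / 2 * (2 / c))"
      using c by simp
    also have "\<dots> \<le> c * (L (real n) / 2 * ln (real M))"
      using M2 c Ln by (intro mult_left_mono) auto
    also have "\<dots> = c * (L (real n) / 2 * (ln (real (M * n)) - ln (real n)))"
      using M1 elim by (simp add: ln_mult)
    also have "\<dots> \<le> c * (L (real n) / 2 * (\<Sum>k\<in>{n..<M * n}. 1 / real k))"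
      using M1 elim c Ln by (intro mult_left_mono ln_diff_le_harmonic_sum) auto
    also have "\<dots> = c * (\<Sum>k\<in>{n..<M * n}. L (real n) / 2 / real k)"
      by (simp add: sum_distrib_left)
    also have "\<dots> \<le> c * (\<Sum>k\<in>{n..<M * n}. L (real k) / real k)"
    proof (intro mult_left_mono sum_mono divide_right_mono)
      fix k assume "k \<in> {n..<M * n}"
      then have "real k \<in> {real n..real M * real n}"
        by (auto simp flip: of_nat_mult)
      then show "L (real n) / 2 \<le> L (real k)"
        using elim(1) by blast
    qed (use c in auto)
    also have "\<dots> \<le> c * ell_star L (real n)"
      using M1 c by (intro mult_left_mono sum_le_ell_star) auto
    finally show ?case
      using Ln ell_star_pos[of "real n"] by simp
  qed
qed

lemma ell_star_decrement_le:
  assumes b: "b \<ge> 1"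
  shows "\<forall>\<^sub>F N in sequentially. ell_star L (real N) - ell_star L (b * real N) \<le> 2 * b * L (real N)"
proof -
  have "\<forall>\<^sub>F N in sequentially.
      \<forall>y\<in>{real N..b * real N}. L (real N) / 2 \<le> L y \<and> L y \<le> 2 * L (real N)"
    by (rule slowly_varying_uniform_ratio_bound_sequentially[OF L_meas L_sv L_pos b])
  then show ?thesis
    using eventually_ge_at_top[of "1::nat"]
  proof eventually_elim
    case (elim N)
    define N' where "N' = nat \<lceil>b * real N\<rceil>"
    have "real N \<le> b * real N" using mult_right_mono[OF b, of "real N"] by simp
    then have N': "N \<le> N'" "b * real N \<le> real N'" "real N' < b * real N + 1"
      unfolding N'_def by linarith+
    have LN: "L (real N) > 0" using L_pos elim(2) by simp
    have "ell_star L (real N) - ell_star L (b * real N) = (\<Sum>k\<in>{N..<N'}. L (real k) / real k)"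
      using ell_star_diff[OF N'(1)] by (simp add: N'_def ell_star_nat_ceiling)
    also have "\<dots> \<le> (\<Sum>k\<in>{N..<N'}. 2 * L (real N) / real N)"
    proof (rule sum_mono)
      fix k assume k: "k \<in> {N..<N'}"
      then have "real k \<in> {real N..b * real N}" using N' by auto
      then have "L (real k) \<le> 2 * L (real N)" using elim(1) by blast
      moreover have "real N \<le> real k" "real N \<ge> 1" using k elim(2) by auto
      ultimately show "L (real k) / real k \<le> 2 * L (real N) / real N"
        using LN L_pos[of "real k"] by (intro frac_le) auto
    qed
    also have "\<dots> = (real N' - real N) * (2 * L (real N) / real N)"
      using N'(1) by (simp add: of_nat_diff)
    also have "\<dots> \<le> (b * real N) * (2 * L (real N) / real N)"
      using N' elim(2) LN by (intro mult_right_mono) auto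
    also have "\<dots> = 2 * b * L (real N)"
      using elim(2) by simp
    finally show ?case .
  qed
qed

lemma ell_star_ratio_tendsto_1:
  assumes b: "b \<ge> 1"
  shows "(\<lambda>N. ell_star L (b * real N) / ell_star L (real N)) \<longlonglongrightarrow> 1"
proof (rule tendsto_sandwich)
  show "\<forall>\<^sub>F N in sequentially.
      1 - 2 * b * (L (real N) / ell_star L (real N)) \<le> ell_star L (b * real N) / ell_star L (real N)"
    using ell_star_decrement_le[OF b]
  proof eventually_elim
    case (elim N)
    have pos: "ell_star L (real N) > 0" by (rule ell_star_pos)
    then have "1 - 2 * b * (L (real N) / ell_star L (real N))
        = (ell_star L (real N) - 2 * b * L (real N)) / ell_star L (real N)"
      by (simp add: field_simps)
    also have "\<dots> \<le> ell_star L (b * real N) / ell_star L (real N)"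
      using elim pos by (intro divide_right_mono) auto
    finally show ?case .
  qed
  show "\<forall>\<^sub>F N in sequentially. ell_star L (b * real N) / ell_star L (real N) \<le> 1"
  proof (intro always_eventually allI)
    fix N
    have "real N \<le> b * real N" using mult_right_mono[OF b, of "real N"] by simp
    then show "ell_star L (b * real N) / ell_star L (real N) \<le> 1"
      using ell_star_pos[of "real N"] by (simp add: ell_star_antimono)
  qed
  show "(\<lambda>N. 1 - 2 * b * (L (real N) / ell_star L (real N))) \<longlonglongrightarrow> 1"
    using tendsto_diff[OF tendsto_const tendsto_mult[OF tendsto_const
          smalloD_tendsto[OF L_smallo_ell_star]], of 1 "2 * b"] by simp
qed simp

theorem slowly_varying_ell_star: "slowly_varying (ell_star L)"
proof (rule slowly_varying_ge_1I)
  show "ell_star L x \<noteq> 0" for x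
    using ell_star_pos[of x] by simp
  fix b :: real assume b: "b \<ge> 1"
  show "((\<lambda>x. ell_star L (b * x) / ell_star L x) \<longlongrightarrow> 1) at_top"
  proof (rule tendsto_sandwich[OF _ _ _ tendsto_const])
    show "((\<lambda>x::real. ell_star L (b * real (nat \<lceil>x\<rceil>)) / ell_star L (real (nat \<lceil>x\<rceil>)))
        \<longlongrightarrow> 1) at_top"
      by (fact filterlim_compose[OF ell_star_ratio_tendsto_1[OF b] filterlim_nat_ceiling_at_top])
    show "\<forall>\<^sub>F x in at_top. ell_star L (b * real (nat \<lceil>x\<rceil>)) / ell_star L (real (nat \<lceil>x\<rceil>))
        \<le> ell_star L (b * x) / ell_star L x"
      using eventually_ge_at_top[of "0::real"]
    proof eventually_elim
      case (elim x)
      have "b * x \<le> b * real (nat \<lceil>x\<rceil>)"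
        using b by (intro mult_left_mono) linarith+
      then show ?case
        using ell_star_pos[of x] by (simp add: ell_star_nat_ceiling divide_right_mono ell_star_antimono)
    qed
    show "\<forall>\<^sub>F x in at_top. ell_star L (b * x) / ell_star L x \<le> 1"
      using eventually_ge_at_top[of "0::real"]
    proof eventually_elim
      case (elim x)
      have "x \<le> b * x" using mult_right_mono[OF b elim] by simp
      then show ?case
        using ell_star_pos[of x] by (simp add: ell_star_antimono)
    qed
  qed
qed

end

end

section \<open>Truncated moments of \<open>X\<close>\<close>

text \<open>\<open>tail_meanX mu N = E[X; X \<ge> N]\<close>, as \<open>P(X = j) = mu (j + 1)\<close>.\<close>
definition tail_meanX :: "(nat \<Rightarrow> real) \<Rightarrow> nat \<Rightarrow> real" where
  "tail_meanX mu N = tail_sum (\<lambda>j. real j * mu (Suc j)) N"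

lemma trunc_meanX_eq_tail_meanX:
  fixes mu :: "nat \<Rightarrow> real"
  assumes mu_prob: "mu sums 1" and mean_fin: "summable (\<lambda>k. real k * mu k)" and y: "y \<ge> 1"
  shows "trunc_meanX mu y + (1 - (\<Sum>k. real k * mu k)) = - tail_meanX mu (Suc (nat \<lfloor>y\<rfloor>))"
proof -
  define j where "j = nat \<lfloor>y\<rfloor>"
  define f where "f k = (real k - 1) * mu k" for k
  have "{k. \<bar>real k - 1\<bar> \<le> y} = {..<Suc (Suc j)}"
  proof safe
    fix k assume "\<bar>real k - 1\<bar> \<le> y"
    then show "k < Suc (Suc j)" unfolding j_def by linarith
  next
    fix k assume "k < Suc (Suc j)"
    then show "\<bar>real k - 1\<bar> \<le> y" unfolding j_def using y by linarith
  qed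
  then have trunc: "trunc_meanX mu y = (\<Sum>k<Suc (Suc j). f k)"
    by (simp add: trunc_meanX_def f_def)
  have "(\<lambda>k. real k * mu k - mu k) sums ((\<Sum>k. real k * mu k) - 1)"
    by (rule sums_diff[OF summable_sums[OF mean_fin] mu_prob])
  moreover have "(\<lambda>k. real k * mu k - mu k) = f"
    by (auto simp: fun_eq_iff f_def left_diff_distrib)
  ultimately have "f sums ((\<Sum>k. real k * mu k) - 1)"
    by simp
  from sums_split_initial_segment[OF this, of "Suc (Suc j)"]
  have "(\<lambda>i. real (i + Suc j) * mu (Suc (i + Suc j)))
      sums ((\<Sum>k. real k * mu k) - 1 - (\<Sum>k<Suc (Suc j). f k))"
    by (simp add: f_def)
  then have "tail_meanX mu (Suc j) = (\<Sum>k. real k * mu k) - 1 - (\<Sum>k<Suc (Suc j). f k)"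
    by (simp add: tail_meanX_def tail_sum_def sums_iff)
  then show ?thesis
    by (simp add: trunc j_def)
qed

context
  fixes mu :: "nat \<Rightarrow> real"
  assumes mu_nonneg: "\<And>k. mu k \<ge> 0" and mu_summable: "summable mu"
begin

lemma tailX_eq_tail_sum: "tailX mu y = tail_sum mu (nat \<lceil>y + 1\<rceil>)"
proof -
  have "{k. real k - 1 \<ge> y} = {k. real k \<ge> y + 1}" by auto
  then show ?thesis
    unfolding tailX_def by (simp add: infsum_atLeast_eq_tail_sum[OF mu_summable mu_nonneg])
qed

lemma tailX_antimono: "y \<le> y' \<Longrightarrow> tailX mu y' \<le> tailX mu y"
  unfolding tailX_eq_tail_sum
  by (intro tail_sum_antimono[OF mu_summable mu_nonneg] nat_mono ceiling_mono) simp

lemma filterlim_at_top_if_scaled_tailX_tendsto_1: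
  assumes mu_pos: "\<forall>\<^sub>F k in sequentially. mu k > 0"
    and a: "(\<lambda>n. real n * tailX mu (a n)) \<longlonglongrightarrow> 1"
  shows "filterlim a at_top sequentially"
  unfolding filterlim_at_top
proof
  fix Z :: real
  have "(\<lambda>n. real n * tailX mu (a n) * inverse (real n)) \<longlonglongrightarrow> 1 * 0"
    by (intro tendsto_mult a lim_inverse_n)
  moreover have "\<forall>\<^sub>F n in sequentially. real n * tailX mu (a n) * inverse (real n) = tailX mu (a n)"
    using eventually_ge_at_top[of "1::nat"] by eventually_elim simp
  ultimately have "(\<lambda>n. tailX mu (a n)) \<longlonglongrightarrow> 0"
    by (simp add: tendsto_cong)
  moreover have "tailX mu Z > 0"
    unfolding tailX_eq_tail_sum by (rule tail_sum_pos[OF mu_summable mu_nonneg mu_pos])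
  ultimately have "\<forall>\<^sub>F n in sequentially. tailX mu (a n) < tailX mu Z"
    by (rule order_tendstoD(2))
  then show "\<forall>\<^sub>F n in sequentially. a n \<ge> Z"
  proof eventually_elim
    case (elim n)
    show ?case
    proof (rule ccontr)
      assume "\<not> Z \<le> a n"
      then have "tailX mu Z \<le> tailX mu (a n)"
        by (intro tailX_antimono) simp
      with elim show False
        by simp
    qed
  qed
qed

end

lemma mean_terms_asymp_equiv:
  fixes mu :: "nat \<Rightarrow> real" and L :: "real \<Rightarrow> real"
  assumes "mu \<sim>[sequentially] (\<lambda>n. L (real n) / (real n)\<^sup>2)"
  shows "(\<lambda>k. real k * mu k) \<sim>[sequentially] (\<lambda>k. L (real k) / real k)"
proof -
  have "(\<lambda>k. real k * mu k) \<sim>[sequentially] (\<lambda>k. real k * (L (real k) / (real k)\<^sup>2))"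
    by (rule asymp_equiv_mult[OF asymp_equiv_refl assms])
  also have "(\<lambda>k. real k * (L (real k) / (real k)\<^sup>2)) = (\<lambda>k. L (real k) / real k)"
    by (auto simp: fun_eq_iff power2_eq_square)
  finally show ?thesis .
qed

context
  fixes mu :: "nat \<Rightarrow> real"
  assumes mu_nonneg: "\<And>k. mu k \<ge> 0" and mean_fin: "summable (\<lambda>k. real k * mu k)"
begin

lemma summable_tail_meanX_terms: "summable (\<lambda>j. real j * mu (Suc j))"
proof -
  have "summable (\<lambda>j. real (Suc j) * mu (Suc j))"
    using mean_fin by (subst summable_Suc_iff)
  then show ?thesis
    by (rule summable_comparison_test'[where N = 0]) (auto simp: mu_nonneg intro!: mult_right_mono)
qed

lemma tail_meanX_tendsto_0: "tail_meanX mu \<longlonglongrightarrow> 0"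
  unfolding tail_meanX_def[abs_def] by (rule tail_sum_tendsto_0[OF summable_tail_meanX_terms])

lemma tailX_le_tail_meanX:
  assumes mu_summable: "summable mu" and y: "y \<ge> 0"
  shows "y * tailX mu y \<le> tail_meanX mu (nat \<lceil>y\<rceil>)"
proof -
  define N where "N = nat \<lceil>y\<rceil>"
  have "nat \<lceil>y + 1\<rceil> = Suc N"
    unfolding N_def using y by (simp add: nat_add_distrib)
  then have "y * tailX mu y = (\<Sum>i. y * mu (Suc (i + N)))"
    using suminf_mult[OF summable_ignore_initial_segment[OF mu_summable, of "Suc N"], of y]
    by (simp add: tailX_eq_tail_sum[OF mu_nonneg mu_summable] tail_sum_def)
  also have "\<dots> \<le> (\<Sum>i. real (i + N) * mu (Suc (i + N)))"
  proof (rule suminf_le)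
    show "y * mu (Suc (i + N)) \<le> real (i + N) * mu (Suc (i + N))" for i
      unfolding N_def using mu_nonneg by (intro mult_right_mono) linarith+
    show "summable (\<lambda>i. y * mu (Suc (i + N)))"
      using summable_ignore_initial_segment[OF mu_summable, of "Suc N"] by (simp add: summable_mult)
    show "summable (\<lambda>i. real (i + N) * mu (Suc (i + N)))"
      using summable_ignore_initial_segment[OF summable_tail_meanX_terms, of N] by simp
  qed
  also have "\<dots> = tail_meanX mu N"
    by (simp add: tail_meanX_def tail_sum_def)
  finally show ?thesis by (simp add: N_def)
qed

lemma smallo_if_scaled_tailX_tendsto_1:
  assumes mu_summable: "summable mu" and a: "(\<lambda>n. real n * tailX mu (a n)) \<longlonglongrightarrow> 1"
    and a_inf: "filterlim a at_top sequentially"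
  shows "a \<in> o[sequentially](\<lambda>n. real n)"
proof (rule landau_o.smallI)
  fix c :: real assume c: "c > 0"
  have "\<forall>\<^sub>F n in sequentially. real n * tailX mu (a n) > 1 / 2"
    by (rule order_tendstoD(1)[OF a]) simp
  moreover have "filterlim (\<lambda>n. nat \<lceil>a n\<rceil>) sequentially sequentially"
    by (rule filterlim_compose[OF filterlim_nat_ceiling_at_top a_inf])
  from order_tendstoD(2)[OF filterlim_compose[OF tail_meanX_tendsto_0 this], of "c / 2"]
  have "\<forall>\<^sub>F n in sequentially. tail_meanX mu (nat \<lceil>a n\<rceil>) < c / 2"
    using c by simp
  moreover have "\<forall>\<^sub>F n in sequentially. a n \<ge> 0"
    using a_inf by (simp add: filterlim_at_top)
  ultimately show "\<forall>\<^sub>F n in sequentially. norm (a n) \<le> c * norm (real n)"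
  proof eventually_elim
    case (elim n)
    have "a n * (1 / 2) \<le> a n * (real n * tailX mu (a n))"
      using elim by (intro mult_left_mono) auto
    also have "\<dots> = real n * (a n * tailX mu (a n))"
      by simp
    also have "\<dots> \<le> real n * (c / 2)"
      using tailX_le_tail_meanX[OF mu_summable elim(3)] elim(2) by (intro mult_left_mono) auto
    finally show ?case
      using elim(3) by (simp add: mult.commute)
  qed
qed

context
  fixes L :: "real \<Rightarrow> real"
  assumes mu_asymp: "mu \<sim>[sequentially] (\<lambda>n. L (real n) / (real n)\<^sup>2)"
begin

lemma summable_L_div_real: "summable (\<lambda>k. L (real k) / real k)"
  using mean_fin mu_nonneg
  by (intro summable_asymp_equiv[OF asymp_equiv_symI[OF mean_terms_asymp_equiv[OF mu_asymp]]]) auto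

lemma tail_meanX_asymp_equiv:
  assumes L_pos: "\<And>x. x > 0 \<Longrightarrow> L x > 0"
  shows "tail_meanX mu \<sim>[sequentially] (\<lambda>N. ell_star L (real (Suc N)))"
proof -
  have "(\<lambda>j. real j * mu (Suc j)) \<sim>[sequentially] (\<lambda>j. real (Suc j) * mu (Suc j))"
    by (intro asymp_equiv_mult asymp_equiv_refl asymp_equivI' LIMSEQ_n_over_Suc_n)
  also have "\<dots> \<sim>[sequentially] (\<lambda>j. L (real (Suc j)) / real (Suc j))"
    by (rule asymp_equiv_compose'[OF mean_terms_asymp_equiv[OF mu_asymp] filterlim_Suc])
  finally have "tail_meanX mu \<sim>[sequentially] tail_sum (\<lambda>j. L (real (Suc j)) / real (Suc j))"
    unfolding tail_meanX_def[abs_def]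
  proof (rule asymp_equiv_tail_sum)
    show "L (real (Suc j)) / real (Suc j) \<ge> 0" for j
      by (rule L_div_real_nonneg[of L, OF L_pos])
    show "summable (\<lambda>j. L (real (Suc j)) / real (Suc j))"
      using summable_L_div_real by (subst summable_Suc_iff)
  qed
  also have "tail_sum (\<lambda>j. L (real (Suc j)) / real (Suc j)) = (\<lambda>N. ell_star L (real (Suc N)))"
    using tail_sum_shift[of "\<lambda>k. L (real k) / real k"]
    by (simp add: fun_eq_iff ell_star_eq_tail_sum[OF L_pos summable_L_div_real] del: of_nat_Suc)
  finally show ?thesis .
qed

end

end

lemma truncated_mean_defect_asymp_equiv:
  fixes mu :: "nat \<Rightarrow> real" and L :: "real \<Rightarrow> real" and a :: "nat \<Rightarrow> real"
  assumes mu_nonneg: "\<And>k. mu k \<ge> 0" and mu_prob: "mu sums 1"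
    and mean_fin: "summable (\<lambda>k. real k * mu k)"
    and L_pos: "\<And>x. x > 0 \<Longrightarrow> L x > 0" and L_meas: "L \<in> borel_measurable borel"
    and L_sv: "slowly_varying L"
    and mu_asymp: "mu \<sim>[sequentially] (\<lambda>n. L (real n) / (real n)\<^sup>2)"
    and a_inf: "filterlim a at_top sequentially"
  shows "(\<lambda>n. real n * trunc_meanX mu (a n) + real n * (1 - (\<Sum>k. real k * mu k)))
      \<sim>[sequentially] (\<lambda>n. - real n * ell_star L (a n))"
proof -
  have L_summable: "summable (\<lambda>k. L (real k) / real k)"
    by (rule summable_L_div_real[OF mu_nonneg mean_fin mu_asymp])
  define J where "J n = Suc (nat \<lfloor>a n\<rfloor>)" for n
  have a_ge_2: "\<forall>\<^sub>F n in sequentially. a n \<ge> 2"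
    using a_inf by (simp add: filterlim_at_top)
  have J_inf: "filterlim J sequentially sequentially"
    unfolding J_def[abs_def]
    by (rule filterlim_compose[OF filterlim_Suc filterlim_compose[OF filterlim_nat_floor_at_top a_inf]])
  have "(\<lambda>n. tail_meanX mu (J n)) \<sim>[sequentially] (\<lambda>n. ell_star L (real (Suc (J n))))"
    using asymp_equiv_compose'[OF tail_meanX_asymp_equiv[OF mu_nonneg mean_fin mu_asymp L_pos] J_inf] .
  also have "\<dots> \<sim>[sequentially] (\<lambda>n. ell_star L (a n))"
  proof (rule slowly_varying_antimono_asymp_equiv[OF _ _ a_inf, of _ 2])
    show "slowly_varying (ell_star L)"
      by (rule slowly_varying_ell_star[OF L_pos L_summable L_meas L_sv])
    show "ell_star L y \<le> ell_star L x" if "x \<le> y" for x y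
      by (rule ell_star_antimono[OF L_pos L_summable that])
    show "\<forall>\<^sub>F n in sequentially. a n \<le> real (Suc (J n)) \<and> real (Suc (J n)) \<le> 2 * a n"
      using a_ge_2 by eventually_elim (simp add: J_def; linarith)
  qed simp
  finally have "(\<lambda>n. - real n * tail_meanX mu (J n)) \<sim>[sequentially] (\<lambda>n. - real n * ell_star L (a n))"
    by (intro asymp_equiv_mult asymp_equiv_refl)
  moreover have "\<forall>\<^sub>F n in sequentially. - real n * tail_meanX mu (J n)
      = real n * trunc_meanX mu (a n) + real n * (1 - (\<Sum>k. real k * mu k))"
    using a_ge_2
  proof eventually_elim
    case (elim n)
    have "real n * trunc_meanX mu (a n) + real n * (1 - (\<Sum>k. real k * mu k))
        = real n * (trunc_meanX mu (a n) + (1 - (\<Sum>k. real k * mu k)))"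
      by (simp only: distrib_left)
    also have "\<dots> = - real n * tail_meanX mu (J n)"
      using trunc_meanX_eq_tail_meanX[OF mu_prob mean_fin, of "a n"] elim by (simp add: J_def)
    finally show ?case by (rule sym)
  qed
  ultimately show ?thesis
    by (rule asymp_equiv_transfer) simp
qed

lemma asymp_equiv_neg_if_sum_smallo:
  fixes f g h :: "'a \<Rightarrow> real"
  assumes "(\<lambda>x. f x + g x) \<sim>[F] h" and "h \<in> o[F](g)"
  shows "f \<sim>[F] (\<lambda>x. - g x)"
proof (rule smallo_imp_asymp_equiv)
  have "(\<lambda>x. f x + g x) \<in> \<Theta>[F](h)"
    by (rule asymp_equiv_imp_bigtheta[OF assms(1)])
  also note assms(2)
  finally show "(\<lambda>x. f x - - g x) \<in> o[F](\<lambda>x. - g x)"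
    by simp
qed

lemma truncated_mean_asymp_equiv:
  fixes mu :: "nat \<Rightarrow> real" and L :: "real \<Rightarrow> real" and a :: "nat \<Rightarrow> real"
  assumes mu_nonneg: "\<And>k. mu k \<ge> 0" and mu_prob: "mu sums 1"
    and mean_fin: "summable (\<lambda>k. real k * mu k)" and mean_lt1: "(\<Sum>k. real k * mu k) < 1"
    and L_pos: "\<And>x. x > 0 \<Longrightarrow> L x > 0" and L_meas: "L \<in> borel_measurable borel"
    and L_sv: "slowly_varying L"
    and mu_asymp: "mu \<sim>[sequentially] (\<lambda>n. L (real n) / (real n)\<^sup>2)"
    and a_inf: "filterlim a at_top sequentially"
  shows "(\<lambda>n. real n * trunc_meanX mu (a n))
      \<sim>[sequentially] (\<lambda>n. - real n * (1 - (\<Sum>k. real k * mu k)))"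
proof -
  let ?m = "\<Sum>k. real k * mu k"
  have L_summable: "summable (\<lambda>k. L (real k) / real k)"
    by (rule summable_L_div_real[OF mu_nonneg mean_fin mu_asymp])
  have "((\<lambda>n. ell_star L (a n)) \<longlongrightarrow> 0) sequentially"
    by (rule filterlim_compose[OF ell_star_tendsto_0[OF L_pos L_summable] a_inf])
  from tendsto_minus[OF this] have "((\<lambda>n. - ell_star L (a n)) \<longlongrightarrow> 0) sequentially"
    by simp
  then have "((\<lambda>n. - ell_star L (a n) / (1 - ?m)) \<longlongrightarrow> 0) sequentially"
    by (rule tendsto_divide_zero)
  moreover have "1 - ?m \<noteq> 0"
    using mean_lt1 by linarith
  ultimately have "(\<lambda>n. - ell_star L (a n)) \<in> o[sequentially](\<lambda>_. 1 - ?m)"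
    by (intro smalloI_tendsto always_eventually allI)
  with landau_o.big_refl[of "\<lambda>n. real n" sequentially]
  have "(\<lambda>n. real n * - ell_star L (a n)) \<in> o[sequentially](\<lambda>n. real n * (1 - ?m))"
    by (rule landau_o.big_small_mult)
  also have "(\<lambda>n. real n * - ell_star L (a n)) = (\<lambda>n. - real n * ell_star L (a n))"
    by auto
  finally have small: "(\<lambda>n. - real n * ell_star L (a n)) \<in> o[sequentially](\<lambda>n. real n * (1 - ?m))" .
  have defect: "(\<lambda>n. real n * trunc_meanX mu (a n) + real n * (1 - ?m))
      \<sim>[sequentially] (\<lambda>n. - real n * ell_star L (a n))"
    by (rule truncated_mean_defect_asymp_equiv[OF assms(1-3,5-9)])
  have "(\<lambda>n. real n * trunc_meanX mu (a n)) \<sim>[sequentially] (\<lambda>n. - (real n * (1 - ?m)))"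
    by (rule asymp_equiv_neg_if_sum_smallo[where f = "\<lambda>n. real n * trunc_meanX mu (a n)"
          and g = "\<lambda>n. real n * (1 - ?m)", OF defect small])
  also have "(\<lambda>n. - (real n * (1 - ?m))) = (\<lambda>n. - real n * (1 - ?m))"
    by auto
  finally show ?thesis .
qed

theorem lemma2p2:
  fixes mu :: "nat \<Rightarrow> real" and L :: "real \<Rightarrow> real" and a :: "nat \<Rightarrow> real"
  assumes mu_nonneg: "\<And>k. mu k \<ge> 0"
    and mu_prob: "mu sums 1"
    and mean_fin: "summable (\<lambda>k. real k * mu k)"
    and mean_lt1: "(\<Sum>k. real k * mu k) < 1"
    and L_pos: "\<And>x. x > 0 \<Longrightarrow> L x > 0"
    and L_meas: "L \<in> borel_measurable borel"
    and L_sv: "slowly_varying L"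
    and mu_asymp: "mu \<sim>[sequentially] (\<lambda>n. L (real n) / (real n)\<^sup>2)"
    and a_def: "(\<lambda>n. real n * tailX mu (a n)) \<longlonglongrightarrow> 1"
  shows "slowly_varying (ell_star L)
       \<and> (ell_star L \<longlongrightarrow> 0) at_top
       \<and> (\<lambda>n. L (real n)) \<in> o[sequentially](\<lambda>n. ell_star L (real n))
       \<and> (\<lambda>n. real n * trunc_meanX mu (a n) + real n * (1 - (\<Sum>k. real k * mu k)))
            \<sim>[sequentially] (\<lambda>n. - real n * ell_star L (a n))
       \<and> (\<lambda>n. real n * trunc_meanX mu (a n))
            \<sim>[sequentially] (\<lambda>n. - real n * (1 - (\<Sum>k. real k * mu k)))
       \<and> a \<in> o[sequentially](\<lambda>n. real n)"
proof -
  have mu_summable: "summable mu"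
    using mu_prob by (rule sums_summable)
  have L_summable: "summable (\<lambda>k. L (real k) / real k)"
    by (rule summable_L_div_real[OF mu_nonneg mean_fin mu_asymp])
  have "\<forall>\<^sub>F k in sequentially. mu k = 0 \<longleftrightarrow> L (real k) / (real k)\<^sup>2 = 0"
    by (rule asymp_equiv_eventually_zeros[OF mu_asymp])
  then have mu_pos: "\<forall>\<^sub>F k in sequentially. mu k > 0"
    using eventually_gt_at_top[of "0::nat"]
  proof eventually_elim
    case (elim k)
    then show ?case
      using L_pos[of "real k"] mu_nonneg[of k] by auto
  qed
  have a_inf: "filterlim a at_top sequentially"
    by (rule filterlim_at_top_if_scaled_tailX_tendsto_1[OF mu_nonneg mu_summable mu_pos a_def])
  show ?thesis
    using slowly_varying_ell_star[OF L_pos L_summable L_meas L_sv]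
      ell_star_tendsto_0[OF L_pos L_summable]
      L_smallo_ell_star[OF L_pos L_summable L_meas L_sv]
      truncated_mean_defect_asymp_equiv[OF mu_nonneg mu_prob mean_fin L_pos L_meas L_sv mu_asymp a_inf]
      truncated_mean_asymp_equiv[OF assms(1-8) a_inf]
      smallo_if_scaled_tailX_tendsto_1[OF mu_nonneg mean_fin mu_summable a_def a_inf]
    by blast
qed

end
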